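(* Let $I$ be a fuzzy implication function, $T$ a t-norm and $j\in\{1,\dots,n_c\}$. If $I$ satisfies the monotonicity of the generalized modus ponens with respect to $T$, i.e. $T(\tilde x,I(\tilde x,y))\le T(x,I(x,y))$ for all $x,\tilde x,y\in[0,1]$ with $\tilde x\le x$, then $FSupp(R^{S,L}_j)\ge FSupp(R^{\tilde S,\tilde L}_j)$ for all $R^{S,L}_j,R^{\tilde S,\tilde L}_j\in\mathcal{R}^{I,T}$ such that $R^{S,L}_j\prec R^{\tilde S,\tilde L}_j$.
   Context: A fuzzy implication function is a map $I:[0,1]^2\to[0,1]$ decreasing in the first variable, increasing in the second, with $I(0,0)=I(1,1)=1$, $I(1,0)=0$. A t-norm is a commutative, associative, increasing binary operation on $[0,1]$ with neutral element $1$. Setting: features $X_1,\dots,X_{n_f}$ with domains $D_m\subseteq\mathbb{R}$, target $Y$ with domain $D_Y$; examples $E=\{E^d=(e^d_1,\dots,e^d_{n_f},y^d):d=1,\dots,n_e\}$; each feature $X_m$ has labels $LL_m^1,\dots,LL_m^{l_m}$ with membership functions $\mu_{LL_m^n}:D_m\to[0,1]$; classes $\mathrm{Class}_1,\dots,\mathrm{Class}_{n_c}$ with $\mu_{\mathrm{Class}_j}:D_Y\to[0,1]$. A rule $R^{S,L}_j$ is given by a class index $j$, a set of features $S=\{X_{m_1},\dots,X_{m_s}\}$ and a set $L$ with exactly one label $LL^{n_{m_i}}_{m_i}$ per feature in $S$; $\mathcal{R}^{I,T}$ is the set of all such rules. For an example $E^d$: $\mu_{ant}^{R^{S,L}_j,E^d}=T(\mu_{LL^{n_{m_1}}_{m_1}}(e^d_{m_1}),\dots,\mu_{LL^{n_{m_s}}_{m_s}}(e^d_{m_s}))$,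 $\mu_{con}^{R^{S,L}_j,E^d}=\mu_{\mathrm{Class}_j}(y^d)$, $\mu_{eval}^{R^{S,L}_j,E^d}=T\big(\mu_{ant}^{R^{S,L}_j,E^d},I(\mu_{ant}^{R^{S,L}_j,E^d},\mu_{con}^{R^{S,L}_j,E^d})\big)$. The fuzzy support is $FSupp(R^{S,L}_j)=\frac{1}{|E|}\sum_{d=1}^{n_e}\mu_{eval}^{R^{S,L}_j,E^d}$. $R^{\tilde S,\tilde L}_{\tilde j}$ is a refinement of $R^{S,L}_j$, written $R^{S,L}_j\prec R^{\tilde S,\tilde L}_{\tilde j}$, iff $\tilde j=j$, $S\subsetneq\tilde S$, and every label of $L$ belongs to $\tilde L$. *)

theory Defs
  imports Complex_Main
begin

definition fuzzy_implication :: "(real \<Rightarrow> real \<Rightarrow> real) \<Rightarrow> bool" where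
  "fuzzy_implication I \<longleftrightarrow>
     (\<forall>x\<in>{0..1}. \<forall>y\<in>{0..1}. I x y \<in> {0..1}) \<and>
     (\<forall>x1\<in>{0..1}. \<forall>x2\<in>{0..1}. \<forall>y\<in>{0..1}. x1 \<le> x2 \<longrightarrow> I x2 y \<le> I x1 y) \<and>
     (\<forall>x\<in>{0..1}. \<forall>y1\<in>{0..1}. \<forall>y2\<in>{0..1}. y1 \<le> y2 \<longrightarrow> I x y1 \<le> I x y2) \<and>
     I 0 0 = 1 \<and> I 1 1 = 1 \<and> I 1 0 = 0"

definition t_norm :: "(real \<Rightarrow> real \<Rightarrow> real) \<Rightarrow> bool" where
  "t_norm T \<longleftrightarrow>
     (\<forall>x\<in>{0..1}. \<forall>y\<in>{0..1}. T x y \<in> {0..1}) \<and>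
     (\<forall>x\<in>{0..1}. \<forall>y\<in>{0..1}. T x y = T y x) \<and>
     (\<forall>x\<in>{0..1}. \<forall>y\<in>{0..1}. \<forall>z\<in>{0..1}. T x (T y z) = T (T x y) z) \<and>
     (\<forall>x1\<in>{0..1}. \<forall>x2\<in>{0..1}. \<forall>y\<in>{0..1}. x1 \<le> x2 \<longrightarrow> T x1 y \<le> T x2 y) \<and>
     (\<forall>x\<in>{0..1}. T x 1 = x)"

definition mono_GMP :: "(real \<Rightarrow> real \<Rightarrow> real) \<Rightarrow> (real \<Rightarrow> real \<Rightarrow> real) \<Rightarrow> bool" where
  "mono_GMP I T \<longleftrightarrow>
     (\<forall>x\<in>{0..1}. \<forall>x'\<in>{0..1}. \<forall>y\<in>{0..1}. x' \<le> x \<longrightarrow> T x' (I x' y) \<le> T x (I x y))"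

definition tnorm_list :: "(real \<Rightarrow> real \<Rightarrow> real) \<Rightarrow> real list \<Rightarrow> real" where
  "tnorm_list T xs = foldr T xs 1"

text \<open>Rule data: class index j, feature set S (indices in 1..nf), label choice lab m for m in S.
  Example d (in 1..ne) has feature values e d m and target value y d;
  mu m n is the membership function of label n of feature m; muC j that of class j.\<close>

definition mu_ant where
  "mu_ant T mu e S lab d =
     tnorm_list T (map (\<lambda>m. mu m (lab m) (e d m)) (sorted_list_of_set S))"

definition mu_con where
  "mu_con muC y j d = muC j (y d)"

definition mu_eval where
  "mu_eval I T mu muC e y j S lab d =
     T (mu_ant T mu e S lab d) (I (mu_ant T mu e S lab d) (mu_con muC y j d))"

definition FSupp :: "(real \<Rightarrow> real \<Rightarrow> real) \<Rightarrow> (real \<Rightarrow> real \<Rightarrow> real) \<Rightarrow>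
    (nat \<Rightarrow> nat \<Rightarrow> real \<Rightarrow> real) \<Rightarrow> (nat \<Rightarrow> real \<Rightarrow> real) \<Rightarrow>
    (nat \<Rightarrow> nat \<Rightarrow> real) \<Rightarrow> (nat \<Rightarrow> real) \<Rightarrow> nat \<Rightarrow> nat \<Rightarrow> nat set \<Rightarrow> (nat \<Rightarrow> nat) \<Rightarrow> real" where
  "FSupp I T mu muC e y ne j S lab =
     (1 / real ne) * (\<Sum>d\<in>{1..ne}. mu_eval I T mu muC e y j S lab d)"

definition is_rule :: "nat \<Rightarrow> nat \<Rightarrow> (nat \<Rightarrow> nat) \<Rightarrow> nat \<Rightarrow> nat set \<Rightarrow> (nat \<Rightarrow> nat) \<Rightarrow> bool" where
  "is_rule nf nc l j S lab \<longleftrightarrow> j \<in> {1..nc} \<and> S \<subseteq> {1..nf} \<and> (\<forall>m\<in>S. lab m \<in> {1..l m})"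

definition refines :: "nat \<Rightarrow> nat set \<Rightarrow> (nat \<Rightarrow> nat) \<Rightarrow> nat \<Rightarrow> nat set \<Rightarrow> (nat \<Rightarrow> nat) \<Rightarrow> bool" where
  "refines j S lab j' S' lab' \<longleftrightarrow> j' = j \<and> S \<subset> S' \<and> (\<forall>m\<in>S. lab' m = lab m)"

end

theory Submission
  imports Defs
begin

text \<open>Adding features to a rule can only lower its antecedent degree, because a t-norm satisfies
  \<open>T x y \<le> y\<close>. Monotonicity of the generalized modus ponens then lowers the evaluation
  \<open>T(a, I(a, c))\<close> of every example, hence the fuzzy support.\<close>

lemma t_norm_unit: "t_norm T \<Longrightarrow> x \<in> {0..1} \<Longrightarrow> y \<in> {0..1} \<Longrightarrow> T x y \<in> {0..1}"
  unfolding t_norm_def by blast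

lemma t_norm_commute: "t_norm T \<Longrightarrow> x \<in> {0..1} \<Longrightarrow> y \<in> {0..1} \<Longrightarrow> T x y = T y x"
  unfolding t_norm_def by blast

lemma t_norm_assoc:
  "t_norm T \<Longrightarrow> x \<in> {0..1} \<Longrightarrow> y \<in> {0..1} \<Longrightarrow> z \<in> {0..1} \<Longrightarrow> T x (T y z) = T (T x y) z"
  unfolding t_norm_def by blast

lemma t_norm_le_right:
  assumes "t_norm T" "x \<in> {0..1}" "y \<in> {0..1}"
  shows "T x y \<le> y"
proof -
  have "T x y \<le> T 1 y"
    using assms unfolding t_norm_def by (meson atLeastAtMost_iff order_refl zero_le_one)
  also have "\<dots> = T y 1"
    using assms(1,3) by (simp add: t_norm_commute)
  also have "\<dots> = y"
    using assms(1,3) unfolding t_norm_def by blast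
  finally show ?thesis .
qed

lemma tnorm_list_unit:
  assumes "t_norm T" "set xs \<subseteq> {0..1}"
  shows "tnorm_list T xs \<in> {0..1}"
  using assms(2) unfolding tnorm_list_def
proof (induction xs)
  case Nil
  then show ?case by simp
next
  case (Cons a xs)
  then show ?case by (simp add: t_norm_unit[OF assms(1)] del: atLeastAtMost_iff)
qed

lemma tnorm_list_insort:
  assumes T: "t_norm T" and unit: "f ` insert x (set xs) \<subseteq> {0..1}"
  shows "tnorm_list T (map f (insort x xs)) = T (f x) (tnorm_list T (map f xs))"
  using unit
proof (induction xs)
  case Nil
  then show ?case by (simp add: tnorm_list_def)
next
  case (Cons a xs)
  have fa: "f a \<in> {0..1}" and fx: "f x \<in> {0..1}" and rest: "f ` set xs \<subseteq> {0..1}"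
    using Cons.prems by auto
  define r where "r = tnorm_list T (map f xs)"
  have r: "r \<in> {0..1}"
    unfolding r_def using tnorm_list_unit[OF T] rest by auto
  show ?case
  proof (cases "x \<le> a")
    case True
    then show ?thesis by (simp add: tnorm_list_def)
  next
    case False
    then have "tnorm_list T (map f (insort x (a # xs))) = T (f a) (T (f x) r)"
      using Cons by (simp add: tnorm_list_def r_def)
    also have "\<dots> = T (f x) (T (f a) r)"
      using t_norm_assoc[OF T fa fx r] t_norm_commute[OF T fa fx] t_norm_assoc[OF T fx fa r]
      by simp
    finally show ?thesis by (simp add: tnorm_list_def r_def)
  qed
qed

definition tnorm_set :: "(real \<Rightarrow> real \<Rightarrow> real) \<Rightarrow> (nat \<Rightarrow> real) \<Rightarrow> nat set \<Rightarrow> real" where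
  "tnorm_set T f A = tnorm_list T (map f (sorted_list_of_set A))"

lemma tnorm_set_unit:
  assumes "t_norm T" "f ` A \<subseteq> {0..1}"
  shows "tnorm_set T f A \<in> {0..1}"
  unfolding tnorm_set_def
  by (rule tnorm_list_unit[OF assms(1)]) (use assms(2) in \<open>cases "finite A"; auto\<close>)

lemma tnorm_set_insert:
  assumes "t_norm T" "finite A" "x \<notin> A" "f ` insert x A \<subseteq> {0..1}"
  shows "tnorm_set T f (insert x A) = T (f x) (tnorm_set T f A)"
  unfolding tnorm_set_def
  using assms tnorm_list_insort[OF assms(1), of f x "sorted_list_of_set A"]
  by (simp add: sorted_list_of_set_insert_remove)

lemma tnorm_set_union_le:
  assumes T: "t_norm T" and "finite A" "finite C" "f ` (A \<union> C) \<subseteq> {0..1}"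
  shows "tnorm_set T f (A \<union> C) \<le> tnorm_set T f A"
  using assms(3,4)
proof (induction C rule: finite_induct)
  case empty
  then show ?case by simp
next
  case (insert x C)
  show ?case
  proof (cases "x \<in> A")
    case True
    then show ?thesis using insert by (simp add: insert_absorb)
  next
    case False
    have fin: "finite (A \<union> C)" using insert \<open>finite A\<close> by simp
    have fx: "f x \<in> {0..1}" and unit: "f ` (A \<union> C) \<subseteq> {0..1}"
      using insert.prems by auto
    have "tnorm_set T f (A \<union> insert x C) = T (f x) (tnorm_set T f (A \<union> C))"
      using tnorm_set_insert[OF T fin] False insert by simp
    also have "\<dots> \<le> tnorm_set T f (A \<union> C)"
      using t_norm_le_right[OF T fx tnorm_set_unit[OF T unit]] .
    also have "\<dots> \<le> tnorm_set T f A"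
      using insert.IH unit by blast
    finally show ?thesis .
  qed
qed

lemma tnorm_set_antimono:
  assumes "t_norm T" "finite B" "A \<subseteq> B" "f ` B \<subseteq> {0..1}"
  shows "tnorm_set T f B \<le> tnorm_set T f A"
proof -
  have "tnorm_set T f (A \<union> (B - A)) \<le> tnorm_set T f A"
    using assms finite_subset by (intro tnorm_set_union_le) auto
  moreover have "A \<union> (B - A) = B" using assms(3) by blast
  ultimately show ?thesis by simp
qed

lemma mu_ant_eq_tnorm_set:
  "mu_ant T mu e S lab d = tnorm_set T (\<lambda>m. mu m (lab m) (e d m)) S"
  unfolding mu_ant_def tnorm_set_def ..

lemma mu_ant_unit:
  fixes S :: "nat set"
  assumes "t_norm T" "\<forall>m\<in>S. mu m (lab m) (e d m) \<in> {0..1}"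
  shows "mu_ant T mu e S lab d \<in> {0..1}"
  unfolding mu_ant_eq_tnorm_set by (rule tnorm_set_unit[OF assms(1)]) (use assms(2) in auto)

lemma mu_ant_refinement_le:
  fixes S S' :: "nat set"
  assumes T: "t_norm T" and "finite S'" "S \<subseteq> S'" and labels: "\<forall>m\<in>S. lab' m = lab m"
    and unit: "\<forall>m\<in>S'. mu m (lab' m) (e d m) \<in> {0..1}"
  shows "mu_ant T mu e S' lab' d \<le> mu_ant T mu e S lab d"
proof -
  have "finite S" using \<open>finite S'\<close> \<open>S \<subseteq> S'\<close> finite_subset by blast
  then have "mu_ant T mu e S lab d = mu_ant T mu e S lab' d"
    unfolding mu_ant_def using labels by (intro arg_cong[where f="tnorm_list T"] map_cong) auto
  moreover have "mu_ant T mu e S' lab' d \<le> mu_ant T mu e S lab' d"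
    unfolding mu_ant_eq_tnorm_set
    by (rule tnorm_set_antimono[OF T \<open>finite S'\<close> \<open>S \<subseteq> S'\<close>]) (use unit in auto)
  ultimately show ?thesis by simp
qed

lemma mu_eval_refinement_le:
  fixes S S' :: "nat set"
  assumes T: "t_norm T" and GMP: "mono_GMP I T"
    and "finite S'" "S \<subseteq> S'" and labels: "\<forall>m\<in>S. lab' m = lab m"
    and unit': "\<forall>m\<in>S'. mu m (lab' m) (e d m) \<in> {0..1}"
    and con: "mu_con muC y j d \<in> {0..1}"
  shows "mu_eval I T mu muC e y j S' lab' d \<le> mu_eval I T mu muC e y j S lab d"
proof -
  have unit: "\<forall>m\<in>S. mu m (lab m) (e d m) \<in> {0..1}"
    using \<open>S \<subseteq> S'\<close> labels unit' by (metis subsetD)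
  have "mu_ant T mu e S' lab' d \<le> mu_ant T mu e S lab d"
    using T \<open>finite S'\<close> \<open>S \<subseteq> S'\<close> labels unit' by (rule mu_ant_refinement_le)
  moreover have "mu_ant T mu e S' lab' d \<in> {0..1}" "mu_ant T mu e S lab d \<in> {0..1}"
    using T unit' unit by (blast intro: mu_ant_unit)+
  ultimately show ?thesis
    using GMP con unfolding mu_eval_def mono_GMP_def by blast
qed

lemma is_rule_memberships_unit:
  assumes "is_rule nf nc l j S lab" "d \<in> {1..ne}"
    and "\<forall>d\<in>{1..ne}. (\<forall>m\<in>{1..nf}. e d m \<in> D m) \<and> y d \<in> DY"
    and "\<forall>m\<in>{1..nf}. \<forall>n\<in>{1..l m}. \<forall>x\<in>D m. mu m n x \<in> {0..1}"
  shows "\<forall>m\<in>S. mu m (lab m) (e d m) \<in> {0..1}"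
proof
  fix m assume "m \<in> S"
  with assms(1) have m: "m \<in> {1..nf}" and "lab m \<in> {1..l m}"
    unfolding is_rule_def by auto
  moreover from assms(2,3) m have "e d m \<in> D m" by blast
  ultimately show "mu m (lab m) (e d m) \<in> {0..1}" using assms(4) by blast
qed

lemma FSupp_mono:
  assumes "\<And>d. d \<in> {1..ne} \<Longrightarrow> mu_eval I T mu muC e y j S' lab' d \<le> mu_eval I T mu muC e y j S lab d"
  shows "FSupp I T mu muC e y ne j S' lab' \<le> FSupp I T mu muC e y ne j S lab"
  unfolding FSupp_def using assms by (intro mult_left_mono sum_mono) auto

theorem proposition8:
  fixes I T :: "real \<Rightarrow> real \<Rightarrow> real"
    and nf nc ne :: nat and l :: "nat \<Rightarrow> nat"
    and D :: "nat \<Rightarrow> real set" and DY :: "real set"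
    and mu :: "nat \<Rightarrow> nat \<Rightarrow> real \<Rightarrow> real" and muC :: "nat \<Rightarrow> real \<Rightarrow> real"
    and e :: "nat \<Rightarrow> nat \<Rightarrow> real" and y :: "nat \<Rightarrow> real"
    and j :: nat and S S' :: "nat set" and lab lab' :: "nat \<Rightarrow> nat"
  assumes "fuzzy_implication I" and "t_norm T"
    and "\<forall>d\<in>{1..ne}. (\<forall>m\<in>{1..nf}. e d m \<in> D m) \<and> y d \<in> DY"
    and "\<forall>m\<in>{1..nf}. \<forall>n\<in>{1..l m}. \<forall>x\<in>D m. mu m n x \<in> {0..1}"
    and "\<forall>c\<in>{1..nc}. \<forall>x\<in>DY. muC c x \<in> {0..1}"
    and "j \<in> {1..nc}"
    and "mono_GMP I T"
    and "is_rule nf nc l j S lab" and "is_rule nf nc l j S' lab'"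
    and "refines j S lab j S' lab'"
  shows "FSupp I T mu muC e y ne j S lab \<ge> FSupp I T mu muC e y ne j S' lab'"
proof -
  have "S \<subseteq> S'" and labels: "\<forall>m\<in>S. lab' m = lab m" and "S' \<subseteq> {1..nf}"
    using assms(9,10) unfolding refines_def is_rule_def by auto
  then have "finite S'" by (meson finite_atLeastAtMost finite_subset)
  have "mu_eval I T mu muC e y j S' lab' d \<le> mu_eval I T mu muC e y j S lab d"
    if d: "d \<in> {1..ne}" for d
  proof (rule mu_eval_refinement_le[OF assms(2,7) \<open>finite S'\<close> \<open>S \<subseteq> S'\<close> labels])
    show "\<forall>m\<in>S'. mu m (lab' m) (e d m) \<in> {0..1}"
      using is_rule_memberships_unit[OF assms(9) d assms(3,4)] .
    show "mu_con muC y j d \<in> {0..1}"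
      unfolding mu_con_def using assms(3,5,6) d by blast
  qed
  then show ?thesis by (rule FSupp_mono)
qed

end
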